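(* Let $A$ be a $2\times2$ integer matrix with determinant $1$ and no eigenvalue of modulus $1$, $f_A\colon\mathbb{T}^2\to\mathbb{T}^2$ the induced Anosov diffeomorphism, and $g_A\colon\mathbb{S}^2\to\mathbb{S}^2$ the homeomorphism induced by $f_A$ on the quotient $\mathbb{S}^2=\mathbb{T}^2/(x\sim -x)$. Then $g_A$ has the two-sided limit shadowing property.
   Context: A homeomorphism $f$ of a compact metric space has the two-sided limit shadowing property if for every sequence $(x_k)_{k\in\mathbb{Z}}$ with $d(f(x_k),x_{k+1})\to0$ as $|k|\to\infty$ there is $y$ with $d(f^k(y),x_k)\to0$ as $|k|\to\infty$. *)

theory Defs
  imports "HOL-Analysis.Analysis"
begin

definition Zlat :: "(real^2) set" where
  "Zlat = {v. \<forall>i. v$i \<in> \<int>}"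

definition realmat :: "int^2^2 \<Rightarrow> real^2^2" where
  "realmat A = (\<chi> i j. real_of_int (A$i$j))"

definition tcls :: "real^2 \<Rightarrow> (real^2) set" where
  "tcls x = {y. y - x \<in> Zlat}"

definition Torus :: "(real^2) set set" where
  "Torus = range tcls"

definition fA :: "int^2^2 \<Rightarrow> (real^2) set \<Rightarrow> (real^2) set" where
  "fA A c = (\<lambda>x. realmat A *v x) ` c"

text \<open>Sphere S^2 = T^2/(x ~ -x): a point is the class {p, -p} of torus points,
  represented as the union of the two cosets (a subset of R^2).\<close>
definition scls :: "real^2 \<Rightarrow> (real^2) set" where
  "scls x = tcls x \<union> tcls (- x)"

definition Sphere :: "(real^2) set set" where
  "Sphere = range scls"

definition Sdist :: "(real^2) set \<Rightarrow> (real^2) set \<Rightarrow> real" where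
  "Sdist a b = Inf {dist p q | p q. p \<in> a \<and> q \<in> b}"

definition gA :: "int^2^2 \<Rightarrow> (real^2) set \<Rightarrow> (real^2) set" where
  "gA A c = \<Union> {fA A t | t. t \<in> Torus \<and> t \<subseteq> c}"

definition iter_int :: "'a set \<Rightarrow> ('a \<Rightarrow> 'a) \<Rightarrow> int \<Rightarrow> 'a \<Rightarrow> 'a" where
  "iter_int X f k = (if 0 \<le> k then f ^^ nat k else (inv_into X f) ^^ nat (- k))"

definition two_sided_limit_shadowing ::
  "'a set \<Rightarrow> ('a \<Rightarrow> 'a \<Rightarrow> real) \<Rightarrow> ('a \<Rightarrow> 'a) \<Rightarrow> bool" where
  "two_sided_limit_shadowing X d f \<longleftrightarrow>
     (\<forall>x :: int \<Rightarrow> 'a. (\<forall>k. x k \<in> X) \<longrightarrow>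
        ((\<lambda>k. d (f (x k)) (x (k + 1))) \<longlongrightarrow> 0) (sup at_top at_bot) \<longrightarrow>
        (\<exists>y\<in>X. ((\<lambda>k. d (iter_int X f k y) (x k)) \<longlongrightarrow> 0) (sup at_top at_bot)))"

end

theory Submission
  imports Defs
begin

text \<open>
  Since \<bar>tr A\<bar> > 2, A has two real eigenvalues off the unit circle. Along the corresponding left
  eigenvectors, the correction turning a two-sided limit pseudo-orbit of A on the plane into a true
  orbit satisfies a scalar recurrence X (k + 1) = r X k + e k with e k \<rightarrow> 0 as \<bar>k\<bar> \<rightarrow> \<infinity>; its
  geometric-series solution (summed over the past if \<bar>r\<bar> < 1, over the future if \<bar>r\<bar> > 1) tends
  to 0 as well, so limit pseudo-orbits of A on the plane are shadowed by orbits. A limit pseudo-orbit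
  of g_A on the sphere lifts, step by step forwards and backwards in time and up to errors
  1 / (\<bar>k\<bar> + 1), to a limit pseudo-orbit of A on the plane, because the lattice translations and
  x \<mapsto> -x are isometries normalised by A; the shadowing orbit projects to an orbit of g_A.
\<close>

lemma at_top_sup_at_bot_int_eq_cofinite: "(sup at_top at_bot :: int filter) = cofinite"
proof (rule filter_eq_iff[THEN iffD2], intro allI iffI)
  fix P :: "int \<Rightarrow> bool"
  assume "eventually P (sup at_top at_bot)"
  then obtain N1 N2 where "\<forall>k\<ge>N1. P k" "\<forall>k\<le>N2. P k"
    unfolding eventually_sup eventually_at_top_linorder eventually_at_bot_linorder by blast
  then have "{k. \<not> P k} \<subseteq> {N2<..<N1}" by (auto simp: not_less[symmetric])
  then show "eventually P cofinite"
    unfolding eventually_cofinite by (rule finite_subset) simp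
next
  fix P :: "int \<Rightarrow> bool"
  assume "eventually P cofinite"
  then have "bdd_above (abs ` {k. \<not> P k})"
    unfolding eventually_cofinite by simp
  then obtain N where N: "\<forall>k. \<not> P k \<longrightarrow> \<bar>k\<bar> \<le> N"
    unfolding bdd_above_def by blast
  have "P k" if "k \<ge> N + 1 \<or> k \<le> - N - 1" for k
    using N that by fastforce
  then have "\<forall>k\<ge>N + 1. P k" "\<forall>k\<le>- N - 1. P k" by simp_all
  then show "eventually P (sup at_top at_bot)"
    unfolding eventually_sup eventually_at_top_linorder eventually_at_bot_linorder by blast
qed

lemma filterlim_inj_cofinite:
  assumes "inj g"
  shows "filterlim g cofinite cofinite"
proof -
  have "finite {x. \<not> P (g x)}" if "finite {x. \<not> P x}" for P
    using finite_vimageI[OF that assms] by (simp add: vimage_def)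
  then show ?thesis unfolding filterlim_iff eventually_cofinite by blast
qed

lemma tendsto_cofinite_compose_inj:
  "(f \<longlongrightarrow> l) cofinite \<Longrightarrow> inj g \<Longrightarrow> ((\<lambda>x. f (g x)) \<longlongrightarrow> l) cofinite"
  using filterlim_compose filterlim_inj_cofinite by blast

lemma tendsto_cofinite_imp_bounded:
  fixes f :: "'a \<Rightarrow> 'b::real_normed_vector"
  assumes "(f \<longlongrightarrow> l) cofinite"
  shows "\<exists>B. \<forall>x. norm (f x) \<le> B"
proof -
  have "eventually (\<lambda>x. dist (f x) l < 1) cofinite"
    using tendstoD[OF assms] by simp
  then have fin: "finite {x. \<not> norm (f x) \<le> norm l + 1}"
    unfolding eventually_cofinite
    by (rule finite_subset[rotated])
      (auto simp: dist_norm intro: order.trans[OF norm_triangle_sub[of _ l]])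
  define B where "B = max (norm l + 1) (Max ((\<lambda>x. norm (f x)) ` {x. \<not> norm (f x) \<le> norm l + 1}))"
  have "norm (f x) \<le> B" for x
  proof (cases "norm (f x) \<le> norm l + 1")
    case False
    then show ?thesis
      unfolding B_def using fin by (intro max.coboundedI2 Max_ge) auto
  qed (simp add: B_def)
  then show ?thesis by blast
qed

lemma tendsto_inverse_abs_int_cofinite: "((\<lambda>k::int. 1 / (\<bar>real_of_int k\<bar> + 1)) \<longlongrightarrow> 0) cofinite"
proof (rule tendstoI)
  fix \<epsilon> :: real assume "\<epsilon> > 0"
  obtain N :: nat where N: "1 / \<epsilon> < N" using reals_Archimedean2 by blast
  have "dist (1 / (\<bar>real_of_int k\<bar> + 1)) 0 < \<epsilon>" if "k \<notin> {- int N..int N}" for k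
  proof -
    have "real N < \<bar>real_of_int k\<bar>" using that by auto
    then have "1 / \<epsilon> < \<bar>real_of_int k\<bar> + 1" using N by linarith
    then have "1 < (\<bar>real_of_int k\<bar> + 1) * \<epsilon>"
      using \<open>\<epsilon> > 0\<close> by (simp add: divide_less_eq)
    then show ?thesis using \<open>\<epsilon> > 0\<close> by (simp add: divide_less_eq mult.commute)
  qed
  then have "{k. \<not> dist (1 / (\<bar>real_of_int k\<bar> + 1)) 0 < \<epsilon>} \<subseteq> {- int N..int N}"
    by blast
  then show "eventually (\<lambda>k. dist (1 / (\<bar>real_of_int k\<bar> + 1)) 0 < \<epsilon>) cofinite"
    unfolding eventually_cofinite by (rule finite_subset) simp
qed

section \<open>Affine recurrences with vanishing forcing\<close>

lemma geometric_weighted_summable: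
  fixes \<eta> :: "'a \<Rightarrow> real"
  assumes "\<bar>q\<bar> < 1" "\<forall>k. \<bar>\<eta> k\<bar> \<le> B"
  shows "summable (\<lambda>i. q ^ i * \<eta> (h i))"
proof (rule summable_comparison_test)
  show "\<exists>N. \<forall>n\<ge>N. norm (q ^ n * \<eta> (h n)) \<le> \<bar>q\<bar> ^ n * B"
    using assms(2) by (auto simp: abs_mult power_abs intro!: mult_left_mono)
  show "summable (\<lambda>n. \<bar>q\<bar> ^ n * B)"
    using assms(1) by (intro summable_mult2 summable_geometric) simp
qed

lemma geometric_convolution_tendsto_zero:
  fixes \<eta> :: "int \<Rightarrow> real"
  assumes q: "\<bar>q\<bar> < 1" and \<eta>: "(\<eta> \<longlongrightarrow> 0) cofinite"
  shows "((\<lambda>k. \<Sum>i. q ^ i * \<eta> (k - int i)) \<longlongrightarrow> 0) cofinite"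
proof -
  obtain B where B: "\<forall>k. \<bar>\<eta> k\<bar> \<le> B"
    using tendsto_cofinite_imp_bounded[OF \<eta>] by auto
  have "((\<lambda>k. \<Sum>i. q ^ i * \<eta> (k - int i)) \<longlongrightarrow> (\<Sum>i. 0)) cofinite"
  proof (rule tannerys_theorem[THEN conjunct2, THEN conjunct2])
    fix i
    have "inj (\<lambda>k. k - int i)" by (simp add: inj_on_def)
    then show "((\<lambda>k. q ^ i * \<eta> (k - int i)) \<longlongrightarrow> 0) cofinite"
      using tendsto_mult_right_zero tendsto_cofinite_compose_inj[OF \<eta>] by blast
    show "eventually (\<lambda>(i, k). norm (q ^ i * \<eta> (k - int i)) \<le> \<bar>q\<bar> ^ i * B) (at_top \<times>\<^sub>F cofinite)"
      using B by (intro always_eventually) (auto simp: abs_mult power_abs intro!: mult_left_mono)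
    show "summable (\<lambda>i. \<bar>q\<bar> ^ i * B)"
      using q by (intro summable_mult2 summable_geometric) simp
  qed simp
  then show ?thesis by simp
qed

lemma affine_recurrence_null_solution_contracting:
  fixes \<eta> :: "int \<Rightarrow> real"
  assumes r: "\<bar>r\<bar> < 1" and \<eta>: "(\<eta> \<longlongrightarrow> 0) cofinite"
  shows "\<exists>X. (\<forall>k. X (k + 1) = r * X k + \<eta> k) \<and> (X \<longlongrightarrow> 0) cofinite"
proof -
  obtain B where B: "\<forall>k. \<bar>\<eta> k\<bar> \<le> B"
    using tendsto_cofinite_imp_bounded[OF \<eta>] by auto
  define X where "X k = (\<Sum>i. r ^ i * \<eta> (k - 1 - int i))" for k
  have "X (k + 1) = r * X k + \<eta> k" for k
  proof -
    have "X (k + 1) = r ^ 0 * \<eta> (k - int 0) + (\<Sum>i. r ^ Suc i * \<eta> (k - int (Suc i)))"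
      unfolding X_def using suminf_split_head[OF geometric_weighted_summable[OF r B, where h = "\<lambda>i. k - int i"]]
      by simp
    also have "(\<Sum>i. r ^ Suc i * \<eta> (k - int (Suc i))) = r * X k"
      unfolding X_def using suminf_mult[OF geometric_weighted_summable[OF r B]]
      by (simp add: algebra_simps)
    finally show ?thesis by simp
  qed
  moreover have "(X \<longlongrightarrow> 0) cofinite"
  proof -
    have "inj (\<lambda>k::int. k - 1)" by (simp add: inj_on_def)
    then have "((\<lambda>k. \<eta> (k - 1)) \<longlongrightarrow> 0) cofinite"
      by (rule tendsto_cofinite_compose_inj[OF \<eta>])
    from geometric_convolution_tendsto_zero[OF r this] show ?thesis
      unfolding X_def by (simp add: algebra_simps)
  qed
  ultimately show ?thesis by blast
qed

text \<open>An expanding recurrence is a contracting one in reversed time.\<close>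
lemma affine_recurrence_null_solution:
  fixes \<eta> :: "int \<Rightarrow> real"
  assumes r: "\<bar>r\<bar> \<noteq> 1" and \<eta>: "(\<eta> \<longlongrightarrow> 0) cofinite"
  shows "\<exists>X. (\<forall>k. X (k + 1) = r * X k + \<eta> k) \<and> (X \<longlongrightarrow> 0) cofinite"
proof (cases "\<bar>r\<bar> < 1")
  case True
  then show ?thesis using affine_recurrence_null_solution_contracting[OF _ \<eta>] by blast
next
  case False
  with r have "\<bar>r\<bar> > 1" by simp
  define q where "q = 1 / r"
  have q: "\<bar>q\<bar> < 1" "r * q = 1"
    using \<open>\<bar>r\<bar> > 1\<close> by (auto simp: q_def abs_divide)
  have "inj (\<lambda>j::int. - j - 1)" by (simp add: inj_on_def)
  then have "((\<lambda>j. - q * \<eta> (- j - 1)) \<longlongrightarrow> 0) cofinite"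
    using tendsto_mult_right_zero tendsto_cofinite_compose_inj[OF \<eta>] by blast
  then obtain Y where Y: "\<forall>j. Y (j + 1) = q * Y j + - q * \<eta> (- j - 1)" "(Y \<longlongrightarrow> 0) cofinite"
    using affine_recurrence_null_solution_contracting[OF q(1)] by blast
  have "Y (- (k + 1)) = r * Y (- k) + \<eta> k" for k
  proof -
    have "Y (- k) = q * Y (- k - 1) - q * \<eta> k"
      using Y(1)[rule_format, of "- k - 1"] by simp
    then have "r * Y (- k) = (r * q) * (Y (- k - 1) - \<eta> k)"
      by (simp only: right_diff_distrib mult.assoc)
    then show ?thesis using q(2) by simp
  qed
  moreover have "((\<lambda>k. Y (- k)) \<longlongrightarrow> 0) cofinite"
    using tendsto_cofinite_compose_inj[OF Y(2), of uminus] by simp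
  ultimately show ?thesis
    by (intro exI[of _ "\<lambda>k. Y (- k)"]) simp
qed

lemma int_chain_choice:
  fixes P :: "int \<Rightarrow> 'a \<Rightarrow> bool" and Q :: "int \<Rightarrow> 'a \<Rightarrow> 'a \<Rightarrow> bool"
  assumes start: "P 0 x0"
    and forward: "\<And>k x. P k x \<Longrightarrow> \<exists>y. P (k + 1) y \<and> Q k x y"
    and backward: "\<And>k y. P (k + 1) y \<Longrightarrow> \<exists>x. P k x \<and> Q k x y"
  shows "\<exists>x. \<forall>k. P k (x k) \<and> Q k (x k) (x (k + 1))"
proof -
  have "\<forall>k x. \<exists>y. P k x \<longrightarrow> P (k + 1) y \<and> Q k x y"
    using forward by blast
  then obtain F where F: "\<And>k x. P k x \<Longrightarrow> P (k + 1) (F k x) \<and> Q k x (F k x)"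
    by metis
  have "\<forall>k y. \<exists>x. P (k + 1) y \<longrightarrow> P k x \<and> Q k x y"
    using backward by blast
  then obtain G where G: "\<And>k y. P (k + 1) y \<Longrightarrow> P k (G k y) \<and> Q k (G k y) y"
    by metis
  define fw where "fw = rec_nat x0 (\<lambda>n. F (int n))"
  define bw where "bw = rec_nat x0 (\<lambda>n. G (- int n - 1))"
  have fw: "P (int n) (fw n)" for n
  proof (induction n)
    case (Suc n)
    then show ?case using F[of "int n" "fw n"] by (simp add: fw_def add.commute)
  qed (simp add: fw_def start)
  have bw: "P (- int n) (bw n)" for n
  proof (induction n)
    case (Suc n)
    have "- int (Suc n) = - int n - 1" "bw (Suc n) = G (- int n - 1) (bw n)"
      by (simp_all add: bw_def)
    then show ?case using G[of "- int n - 1" "bw n"] Suc by (simp only:) simp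
  qed (simp add: bw_def start)
  define x where "x k = (if 0 \<le> k then fw (nat k) else bw (nat (- k)))" for k
  have "P k (x k) \<and> Q k (x k) (x (k + 1))" for k
  proof (cases "0 \<le> k")
    case True
    then obtain n where k: "k = int n" using nonneg_int_cases by blast
    have "x k = fw n" "x (k + 1) = F k (fw n)"
      using k by (simp_all add: x_def fw_def nat_add_distrib)
    then show ?thesis using fw[of n] F[of k "fw n"] k by simp
  next
    case False
    define n where "n = nat (- k - 1)"
    have k: "k = - int n - 1" using False by (simp add: n_def)
    have "x (k + 1) = bw n"
      using k by (simp add: x_def fw_def bw_def)
    moreover have "x k = G k (bw n)"
      using k by (simp add: x_def bw_def nat_add_distrib)
    ultimately show ?thesis using bw[of n] G[of k "bw n"] k by simp
  qed
  then show ?thesis by blast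
qed

section \<open>The sphere as a quotient of the plane\<close>

lemma Zlat_iff: "v \<in> Zlat \<longleftrightarrow> v$1 \<in> \<int> \<and> v$2 \<in> \<int>"
  by (simp add: Zlat_def forall_2)

lemma Zlat_add: "u \<in> Zlat \<Longrightarrow> v \<in> Zlat \<Longrightarrow> u + v \<in> Zlat"
  and Zlat_diff: "u \<in> Zlat \<Longrightarrow> v \<in> Zlat \<Longrightarrow> u - v \<in> Zlat"
  and Zlat_0: "0 \<in> Zlat"
  by (simp_all add: Zlat_iff)

lemma realmat_Zlat: "v \<in> Zlat \<Longrightarrow> realmat B *v v \<in> Zlat"
  unfolding Zlat_def matrix_vector_mult_def realmat_def by (auto intro!: Ints_sum Ints_mult)

lemma mem_scls: "y \<in> scls x \<longleftrightarrow> y - x \<in> Zlat \<or> y + x \<in> Zlat"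
  by (simp add: scls_def tcls_def)

lemma scls_self: "x \<in> scls x"
  by (simp add: mem_scls Zlat_0)

lemma scls_sym: "y \<in> scls x \<Longrightarrow> x \<in> scls y"
proof (unfold mem_scls, elim disjE)
  assume "y - x \<in> Zlat"
  then have "0 - (y - x) \<in> Zlat" by (rule Zlat_diff[OF Zlat_0])
  then show "x - y \<in> Zlat \<or> x + y \<in> Zlat" by simp
next
  assume "y + x \<in> Zlat"
  then show "x - y \<in> Zlat \<or> x + y \<in> Zlat" by (simp add: add.commute)
qed

lemma scls_trans:
  assumes "z \<in> scls y" "y \<in> scls x"
  shows "z \<in> scls x"
proof -
  from assms consider
      "z - y \<in> Zlat" "y - x \<in> Zlat" | "z - y \<in> Zlat" "y + x \<in> Zlat"
    | "z + y \<in> Zlat" "y - x \<in> Zlat" | "z + y \<in> Zlat" "y + x \<in> Zlat"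
    unfolding mem_scls by blast
  then show ?thesis
  proof cases
    case 1
    have "z - x = (z - y) + (y - x)" by simp
    then show ?thesis using Zlat_add[OF 1] by (simp add: mem_scls)
  next
    case 2
    have "z + x = (z - y) + (y + x)" by simp
    then show ?thesis using Zlat_add[OF 2] by (simp add: mem_scls)
  next
    case 3
    have "z + x = (z + y) - (y - x)" by simp
    then show ?thesis using Zlat_diff[OF 3] by (simp add: mem_scls)
  next
    case 4
    have "z - x = (z + y) - (y + x)" by simp
    then show ?thesis using Zlat_diff[OF 4] by (simp add: mem_scls)
  qed
qed

lemma scls_eq: "y \<in> scls x \<Longrightarrow> scls y = scls x"
  using scls_sym scls_trans by blast

lemma realmat_scls: "y \<in> scls x \<Longrightarrow> realmat B *v y \<in> scls (realmat B *v x)"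
  using realmat_Zlat[of _ B]
  by (auto simp: mem_scls simp flip: matrix_vector_mult_diff_distrib matrix_vector_right_distrib)

text \<open>The deck transformations v + n and n - v (n in the lattice) are isometries permuting the
  classes, so a distance realised between two classes is realised from any point of the first.\<close>
lemma scls_transport:
  assumes "p \<in> scls u" "q \<in> scls v"
  shows "\<exists>v'\<in>scls v. dist u v' = dist p q"
proof -
  have "u - p \<in> Zlat \<or> u + p \<in> Zlat" using scls_sym[OF assms(1)] by (simp add: mem_scls)
  then show ?thesis
  proof
    assume "u - p \<in> Zlat"
    then have "q + (u - p) \<in> scls v"
      using scls_trans[OF _ assms(2)] by (simp add: mem_scls)
    moreover have "dist u (q + (u - p)) = dist p q"
      by (simp add: dist_norm algebra_simps)
    ultimately show ?thesis by blast
  next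
    assume "u + p \<in> Zlat"
    then have "(u + p) - q \<in> scls v"
      using scls_trans[OF _ assms(2)] by (simp add: mem_scls)
    moreover have "dist u ((u + p) - q) = dist p q"
      by (simp add: dist_norm norm_minus_commute algebra_simps)
    ultimately show ?thesis by blast
  qed
qed

lemma Sdist_le: "p \<in> S \<Longrightarrow> q \<in> T \<Longrightarrow> Sdist S T \<le> dist p q"
  unfolding Sdist_def by (rule cInf_lower) (auto intro!: bdd_belowI[of _ 0])

lemma Sdist_nonneg: "S \<noteq> {} \<Longrightarrow> T \<noteq> {} \<Longrightarrow> 0 \<le> Sdist S T"
  unfolding Sdist_def by (rule cInf_greatest) auto

lemma Sdist_commute: "Sdist S T = Sdist T S"
proof -
  have "{dist p q | p q. p \<in> S \<and> q \<in> T} = {dist q p | p q. p \<in> S \<and> q \<in> T}"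
    by (simp add: dist_commute)
  also have "\<dots> = {dist p q | p q. p \<in> T \<and> q \<in> S}" by blast
  finally show ?thesis unfolding Sdist_def by simp
qed

lemma Sdist_scls_approx:
  assumes "\<epsilon> > 0"
  shows "\<exists>v'\<in>scls v. dist u v' < Sdist (scls u) (scls v) + \<epsilon>"
proof -
  have "{dist p q | p q. p \<in> scls u \<and> q \<in> scls v} \<noteq> {}"
    using scls_self by blast
  from cInf_lessD[OF this, of "Sdist (scls u) (scls v) + \<epsilon>"] assms
  obtain p q where pq: "p \<in> scls u" "q \<in> scls v" "dist p q < Sdist (scls u) (scls v) + \<epsilon>"
    unfolding Sdist_def by auto
  obtain v' where "v' \<in> scls v" "dist u v' = dist p q"
    using scls_transport[OF pq(1,2)] by blast
  with pq(3) show ?thesis by (intro bexI[of _ v']) simp_all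
qed

lemma tcls_eq: "y - x \<in> Zlat \<Longrightarrow> tcls y = tcls x"
  unfolding tcls_def using Zlat_add Zlat_diff by fastforce

lemma Torus_subset_scls:
  assumes "T \<in> Torus" "T \<subseteq> scls x"
  shows "T = tcls x \<or> T = tcls (- x)"
proof -
  obtain y where y: "T = tcls y" using assms(1) by (auto simp: Torus_def)
  have "y \<in> tcls y" by (simp add: tcls_def Zlat_0)
  then have "y - x \<in> Zlat \<or> y - (- x) \<in> Zlat" using assms(2) y by (simp add: mem_scls subset_iff)
  then show ?thesis using y tcls_eq by blast
qed

section \<open>Hyperbolic matrices in SL(2, Z)\<close>

locale hyperbolic_SL2Z =
  fixes A :: "int^2^2"
  assumes det_A: "det A = 1"
    and trace_A: "\<bar>A$1$1 + A$2$2\<bar> > 2"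
begin

abbreviation M :: "real^2^2" where "M \<equiv> realmat A"

definition a :: real where "a = of_int (A$1$1)"
definition b :: real where "b = of_int (A$1$2)"
definition c :: real where "c = of_int (A$2$1)"
definition d :: real where "d = of_int (A$2$2)"

lemma M_apply [simp]:
  "(M *v x)$1 = a * x$1 + b * x$2"
  "(M *v x)$2 = c * x$1 + d * x$2"
  by (simp_all add: matrix_vector_mult_def sum_2 realmat_def a_def b_def c_def d_def)

lemma det_abcd: "a * d - b * c = 1"
proof -
  have "A$1$1 * A$2$2 - A$1$2 * A$2$1 = 1" using det_A by (simp add: det_2)
  then have "real_of_int (A$1$1 * A$2$2 - A$1$2 * A$2$1) = 1" by simp
  then show ?thesis by (simp add: a_def b_def c_def d_def)
qed

lemma trace_abcd: "\<bar>a + d\<bar> > 2"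
proof -
  have "real_of_int \<bar>A$1$1 + A$2$2\<bar> > 2" using trace_A by linarith
  then show ?thesis by (simp add: a_def d_def)
qed

lemma b_nonzero: "b \<noteq> 0"
proof
  assume "b = 0"
  then have "a * d = 1" using det_abcd by simp
  then have "A$1$1 * A$2$2 = 1" unfolding a_def d_def by (metis of_int_eq_1_iff of_int_mult)
  then have "\<bar>A$1$1 + A$2$2\<bar> = 2" by (auto simp: zmult_eq_1_iff)
  then show False using trace_A by simp
qed

lemma eigenvalues_exist:
  obtains r s where "r \<noteq> s" "r\<^sup>2 - (a + d) * r + 1 = 0" "s\<^sup>2 - (a + d) * s + 1 = 0"
proof
  define t where "t = a + d"
  have disc: "t\<^sup>2 - 4 > 0"
    using trace_abcd abs_le_square_iff[of t 2] unfolding t_def by (simp add: not_le[symmetric])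
  define \<rho> where "\<rho> = sqrt (t\<^sup>2 - 4)"
  have \<rho>: "\<rho> > 0" "\<rho>\<^sup>2 = t\<^sup>2 - 4" using disc by (simp_all add: \<rho>_def)
  show "(t + \<rho>) / 2 \<noteq> (t - \<rho>) / 2" using \<rho> by simp
  show "((t + \<rho>) / 2)\<^sup>2 - (a + d) * ((t + \<rho>) / 2) + 1 = 0"
    using \<rho>(2) unfolding t_def by (simp add: power2_eq_square field_simps)
  show "((t - \<rho>) / 2)\<^sup>2 - (a + d) * ((t - \<rho>) / 2) + 1 = 0"
    using \<rho>(2) unfolding t_def by (simp add: power2_eq_square field_simps)
qed

lemma eigenvalue_not_unimodular:
  assumes "r\<^sup>2 - (a + d) * r + 1 = 0"
  shows "\<bar>r\<bar> \<noteq> 1"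
  using assms trace_abcd by (auto simp: abs_if split: if_splits)

text \<open>For a root r of the characteristic polynomial, (r - d, b) is a left eigenvector of M.\<close>
definition eigenform :: "real \<Rightarrow> real^2 \<Rightarrow> real" where
  "eigenform r x = (r - d) * x$1 + b * x$2"

lemma eigenform_add [simp]: "eigenform r (x + y) = eigenform r x + eigenform r y"
  and eigenform_diff [simp]: "eigenform r (x - y) = eigenform r x - eigenform r y"
  and eigenform_scaleR [simp]: "eigenform r (\<alpha> *\<^sub>R x) = \<alpha> * eigenform r x"
  by (simp_all add: eigenform_def algebra_simps)

lemma eigenform_M:
  assumes "r\<^sup>2 - (a + d) * r + 1 = 0"
  shows "eigenform r (M *v x) = r * eigenform r x"
proof -
  have "eigenform r (M *v x) - r * eigenform r x
      = - x$1 * (r\<^sup>2 - (a + d) * r + 1) + x$1 * (1 - (a * d - b * c))"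
    by (simp add: eigenform_def algebra_simps power2_eq_square)
  then show ?thesis using assms det_abcd by simp
qed

definition dual_vector :: "real \<Rightarrow> real \<Rightarrow> real^2" where
  "dual_vector r s = (\<chi> i. if i = 1 then 1 / (r - s) else (d - s) / (r - s) / b)"

lemma dual_vector_apply [simp]:
  "dual_vector r s $ 1 = 1 / (r - s)"
  "b * dual_vector r s $ 2 = (d - s) / (r - s)"
  by (simp_all add: dual_vector_def b_nonzero)

lemma eigenform_dual_vector:
  assumes "r \<noteq> s"
  shows "eigenform r (dual_vector r s) = 1" "eigenform s (dual_vector r s) = 0"
proof -
  have "eigenform r (dual_vector r s) = (r - d) / (r - s) + (d - s) / (r - s)"
    by (simp add: eigenform_def)
  also have "\<dots> = 1"
    using assms by (simp add: add_divide_distrib[symmetric])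
  finally show "eigenform r (dual_vector r s) = 1" .
  show "eigenform s (dual_vector r s) = 0"
    by (simp add: eigenform_def add_divide_distrib[symmetric])
qed

lemma eigenform_expansion:
  assumes "r \<noteq> s"
  shows "x = eigenform r x *\<^sub>R dual_vector r s + eigenform s x *\<^sub>R dual_vector s r"
    (is "x = ?\<alpha> *\<^sub>R _ + ?\<beta> *\<^sub>R _")
proof -
  have swap: "\<gamma> / (s - r) = - \<gamma> / (r - s)" for \<gamma> :: real
    by (metis minus_diff_eq minus_divide_left minus_divide_right)
  have "?\<alpha> - ?\<beta> = (r - s) * x$1"
    "?\<alpha> * (d - s) - ?\<beta> * (d - r) = (r - s) * (b * x$2)"
    by (simp_all add: eigenform_def algebra_simps)
  then have "(?\<alpha> - ?\<beta>) / (r - s) = x$1"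
    "(?\<alpha> * (d - s) - ?\<beta> * (d - r)) / (r - s) = b * x$2"
    using assms by simp_all
  moreover have "(?\<alpha> *\<^sub>R dual_vector r s + ?\<beta> *\<^sub>R dual_vector s r) $ 1 = (?\<alpha> - ?\<beta>) / (r - s)"
    by (simp add: swap diff_divide_distrib)
  moreover have "b * (?\<alpha> *\<^sub>R dual_vector r s + ?\<beta> *\<^sub>R dual_vector s r) $ 2
      = ?\<alpha> * (b * dual_vector r s $ 2) + ?\<beta> * (b * dual_vector s r $ 2)"
    by (simp add: algebra_simps del: dual_vector_apply)
  moreover have "\<dots> = (?\<alpha> * (d - s) - ?\<beta> * (d - r)) / (r - s)"
    unfolding dual_vector_apply swap by (simp add: diff_divide_distrib add_divide_distrib algebra_simps)
  ultimately show ?thesis using b_nonzero by (simp add: vec_eq_iff forall_2)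
qed

lemma eigenform_eqI:
  assumes "r \<noteq> s" "eigenform r x = eigenform r y" "eigenform s x = eigenform s y"
  shows "x = y"
  using eigenform_expansion[OF assms(1), of x] eigenform_expansion[OF assms(1), of y] assms(2,3)
  by simp

lemma linear_pseudo_orbit_shadowing:
  fixes w :: "int \<Rightarrow> real^2"
  assumes "((\<lambda>k. M *v w k - w (k + 1)) \<longlongrightarrow> 0) cofinite"
  shows "\<exists>z. (\<forall>k. z (k + 1) = M *v z k) \<and> ((\<lambda>k. z k - w k) \<longlongrightarrow> 0) cofinite"
proof -
  define e where "e k = M *v w k - w (k + 1)" for k
  obtain r s where rs: "r \<noteq> s" and r: "r\<^sup>2 - (a + d) * r + 1 = 0" and s: "s\<^sup>2 - (a + d) * s + 1 = 0"
    using eigenvalues_exist by blast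
  have "((\<lambda>k. e k $ i) \<longlongrightarrow> 0) cofinite" for i
    using tendsto_vec_nth[OF assms, of i] by (simp add: e_def)
  then have "((\<lambda>k. eigenform \<rho> (e k)) \<longlongrightarrow> 0) cofinite" for \<rho>
    unfolding eigenform_def by (intro tendsto_add_zero tendsto_mult_right_zero)
  then obtain X Y where
    X: "\<forall>k. X (k + 1) = r * X k + eigenform r (e k)" "(X \<longlongrightarrow> 0) cofinite" and
    Y: "\<forall>k. Y (k + 1) = s * Y k + eigenform s (e k)" "(Y \<longlongrightarrow> 0) cofinite"
    using affine_recurrence_null_solution eigenvalue_not_unimodular[OF r]
      eigenvalue_not_unimodular[OF s] by metis
  define D where "D k = X k *\<^sub>R dual_vector r s + Y k *\<^sub>R dual_vector s r" for k
  define z where "z k = w k + D k" for k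
  have D: "eigenform r (D k) = X k" "eigenform s (D k) = Y k" for k
    using eigenform_dual_vector[OF rs] eigenform_dual_vector[OF rs[symmetric]]
    by (simp_all add: D_def)
  have "z (k + 1) = M *v z k" for k
  proof (rule eigenform_eqI[OF rs])
    show "eigenform r (z (k + 1)) = eigenform r (M *v z k)"
      using X(1)[rule_format, of k] unfolding z_def e_def
      by (simp add: D eigenform_M[OF r] algebra_simps)
    show "eigenform s (z (k + 1)) = eigenform s (M *v z k)"
      using Y(1)[rule_format, of k] unfolding z_def e_def
      by (simp add: D eigenform_M[OF s] algebra_simps)
  qed
  moreover have "((\<lambda>k. z k - w k) \<longlongrightarrow> 0) cofinite"
  proof -
    have scaled: "((\<lambda>k. F k *\<^sub>R u) \<longlongrightarrow> 0) cofinite" if "(F \<longlongrightarrow> 0) cofinite"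
      for F :: "int \<Rightarrow> real" and u :: "real^2"
      using tendsto_scaleR[OF that tendsto_const[of u]] by simp
    show ?thesis
      unfolding z_def D_def using scaled[OF X(2)] scaled[OF Y(2)] by (simp add: tendsto_add_zero)
  qed
  ultimately show ?thesis by blast
qed

definition Ainv :: "int^2^2" where
  "Ainv = vector [vector [A$2$2, - A$1$2], vector [- A$2$1, A$1$1]]"

lemma M_inverse:
  "realmat Ainv *v (M *v x) = x" "M *v (realmat Ainv *v x) = x"
proof -
  have Minv: "(realmat Ainv *v y)$1 = d * y$1 - b * y$2" "(realmat Ainv *v y)$2 = a * y$2 - c * y$1" for y
    by (simp_all add: matrix_vector_mult_def sum_2 realmat_def Ainv_def a_def b_def c_def d_def)
  have "d * (a * x$1 + b * x$2) - b * (c * x$1 + d * x$2) = (a * d - b * c) * x$1"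
    "a * (c * x$1 + d * x$2) - c * (a * x$1 + b * x$2) = (a * d - b * c) * x$2"
    "a * (d * x$1 - b * x$2) + b * (a * x$2 - c * x$1) = (a * d - b * c) * x$1"
    "c * (d * x$1 - b * x$2) + d * (a * x$2 - c * x$1) = (a * d - b * c) * x$2"
    by (simp_all add: algebra_simps)
  then show "realmat Ainv *v (M *v x) = x" "M *v (realmat Ainv *v x) = x"
    by (simp_all add: vec_eq_iff forall_2 Minv det_abcd)
qed

lemma M_scls_iff: "M *v y \<in> scls (M *v x) \<longleftrightarrow> y \<in> scls x"
  using realmat_scls[of "M *v y" "M *v x" Ainv] realmat_scls[of y x A] by (auto simp: M_inverse)

lemma fA_tcls: "fA A (tcls x) = tcls (M *v x)"
proof (intro equalityI subsetI)
  fix u assume "u \<in> fA A (tcls x)"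
  then obtain v where "u = M *v v" "v - x \<in> Zlat" by (auto simp: fA_def tcls_def)
  then show "u \<in> tcls (M *v x)"
    using realmat_Zlat[of "v - x" A] by (simp add: tcls_def matrix_vector_mult_diff_distrib)
next
  fix u assume "u \<in> tcls (M *v x)"
  then have "realmat Ainv *v (u - M *v x) \<in> Zlat" by (simp add: tcls_def realmat_Zlat)
  then have "realmat Ainv *v u \<in> tcls x"
    by (simp add: tcls_def matrix_vector_mult_diff_distrib M_inverse)
  then show "u \<in> fA A (tcls x)"
    unfolding fA_def using M_inverse(2) by (metis image_eqI)
qed

lemma gA_scls: "gA A (scls x) = scls (M *v x)"
proof -
  have "tcls x \<in> Torus" "tcls (- x) \<in> Torus" "tcls x \<subseteq> scls x" "tcls (- x) \<subseteq> scls x"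
    by (auto simp: Torus_def scls_def)
  then have "{fA A T | T. T \<in> Torus \<and> T \<subseteq> scls x} = {fA A (tcls x), fA A (tcls (- x))}"
    using Torus_subset_scls by blast
  then show ?thesis
    by (simp add: gA_def fA_tcls scls_def matrix_vector_mult_diff_distrib[of _ 0, simplified])
qed

lemma inj_on_gA_Sphere: "inj_on (gA A) Sphere"
proof (rule inj_onI)
  fix S T assume "S \<in> Sphere" "T \<in> Sphere" "gA A S = gA A T"
  then obtain x y where "S = scls x" "T = scls y" "scls (M *v x) = scls (M *v y)"
    by (auto simp: Sphere_def gA_scls)
  then show "S = T" using scls_self M_scls_iff scls_eq by metis
qed

lemma iter_int_gA_orbit:
  assumes orbit: "\<And>k. z (k + 1) = M *v z k"
  shows "iter_int Sphere (gA A) k (scls (z 0)) = scls (z k)"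
proof -
  have forward: "(gA A ^^ n) (scls (z 0)) = scls (z (int n))" for n
    by (induction n) (simp_all add: gA_scls orbit[symmetric] add.commute)
  have step: "inv_into Sphere (gA A) (scls (z j)) = scls (z (j - 1))" for j
    using inv_into_f_f[OF inj_on_gA_Sphere, of "scls (z (j - 1))"] orbit[of "j - 1"]
    by (simp add: Sphere_def gA_scls)
  have backward: "(inv_into Sphere (gA A) ^^ n) (scls (z 0)) = scls (z (- int n))" for n
  proof (induction n)
    case (Suc n)
    have "- int (Suc n) = - int n - 1" by simp
    with Suc.IH step[of "- int n"] show ?case by (simp only: funpow.simps comp_def)
  qed simp
  show ?thesis
    using forward[of "nat k"] backward[of "nat (- k)"] by (simp add: iter_int_def)
qed

section \<open>Shadowing on the sphere\<close>

lemma lift_pseudo_orbit: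
  fixes S :: "int \<Rightarrow> (real^2) set" and \<epsilon> :: "int \<Rightarrow> real"
  assumes Sphere: "\<And>k. S k \<in> Sphere" and pos: "\<And>k. \<epsilon> k > 0"
  shows "\<exists>w. \<forall>k. scls (w k) = S k \<and>
           dist (M *v w k) (w (k + 1)) < Sdist (gA A (S k)) (S (k + 1)) + \<epsilon> k"
proof -
  obtain x0 where "scls x0 = S 0" using Sphere[of 0] by (auto simp: Sphere_def)
  show ?thesis
  proof (rule int_chain_choice[where P = "\<lambda>k x. scls x = S k"
        and Q = "\<lambda>k x y. dist (M *v x) y < Sdist (gA A (S k)) (S (k + 1)) + \<epsilon> k"])
    show "scls x0 = S 0" by fact
  next
    fix k x assume "scls x = S k"
    obtain y where y: "S (k + 1) = scls y" using Sphere by (auto simp: Sphere_def)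
    obtain y' where "y' \<in> scls y" "dist (M *v x) y' < Sdist (scls (M *v x)) (scls y) + \<epsilon> k"
      using Sdist_scls_approx[OF pos] by blast
    then show "\<exists>y'. scls y' = S (k + 1) \<and> dist (M *v x) y' < Sdist (gA A (S k)) (S (k + 1)) + \<epsilon> k"
      using scls_eq \<open>scls x = S k\<close>[symmetric] y by (auto simp: gA_scls)
  next
    fix k y assume "scls y = S (k + 1)"
    obtain x where x: "S k = scls x" using Sphere by (auto simp: Sphere_def)
    obtain u where u: "u \<in> scls (M *v x)" "dist y u < Sdist (scls y) (scls (M *v x)) + \<epsilon> k"
      using Sdist_scls_approx[OF pos] by blast
    have "M *v (realmat Ainv *v u) \<in> scls (M *v x)" using u(1) by (simp add: M_inverse)
    then have "scls (realmat Ainv *v u) = S k" using x scls_eq by (simp add: M_scls_iff)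
    moreover have "dist (M *v (realmat Ainv *v u)) y < Sdist (gA A (S k)) (S (k + 1)) + \<epsilon> k"
      using u(2) x \<open>scls y = S (k + 1)\<close>
      by (simp add: M_inverse gA_scls Sdist_commute dist_commute)
    ultimately show "\<exists>x'. scls x' = S k \<and> dist (M *v x') y < Sdist (gA A (S k)) (S (k + 1)) + \<epsilon> k"
      by blast
  qed
qed

lemma lift_limit_pseudo_orbit:
  fixes S :: "int \<Rightarrow> (real^2) set"
  assumes Sphere: "\<And>k. S k \<in> Sphere"
    and pseudo: "((\<lambda>k. Sdist (gA A (S k)) (S (k + 1))) \<longlongrightarrow> 0) cofinite"
  shows "\<exists>w. (\<forall>k. scls (w k) = S k) \<and> ((\<lambda>k. M *v w k - w (k + 1)) \<longlongrightarrow> 0) cofinite"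
proof -
  define \<epsilon> where "\<epsilon> k = 1 / (\<bar>real_of_int k\<bar> + 1)" for k
  have "\<epsilon> k > 0" for k by (simp add: \<epsilon>_def add_pos_nonneg)
  then obtain w where w: "\<And>k. scls (w k) = S k"
    and step: "\<And>k. dist (M *v w k) (w (k + 1)) < Sdist (gA A (S k)) (S (k + 1)) + \<epsilon> k"
    using lift_pseudo_orbit[of S \<epsilon>] Sphere by blast
  have bound: "((\<lambda>k. Sdist (gA A (S k)) (S (k + 1)) + \<epsilon> k) \<longlongrightarrow> 0) cofinite"
    unfolding \<epsilon>_def using tendsto_add_zero[OF pseudo tendsto_inverse_abs_int_cofinite] .
  have "norm (M *v w k - w (k + 1)) \<le> Sdist (gA A (S k)) (S (k + 1)) + \<epsilon> k" for k
    using step[of k] by (simp add: dist_norm)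
  then have "((\<lambda>k. norm (M *v w k - w (k + 1))) \<longlongrightarrow> 0) cofinite"
    by (intro tendsto_sandwich[OF _ _ tendsto_const bound] always_eventually allI) simp_all
  then have "((\<lambda>k. M *v w k - w (k + 1)) \<longlongrightarrow> 0) cofinite"
    by (rule tendsto_norm_zero_cancel)
  with w show ?thesis by blast
qed

theorem two_sided_limit_shadowing_gA: "two_sided_limit_shadowing Sphere Sdist (gA A)"
  unfolding two_sided_limit_shadowing_def at_top_sup_at_bot_int_eq_cofinite
proof (intro allI impI)
  fix S :: "int \<Rightarrow> (real^2) set"
  assume "\<forall>k. S k \<in> Sphere" "((\<lambda>k. Sdist (gA A (S k)) (S (k + 1))) \<longlongrightarrow> 0) cofinite"
  then obtain w where w: "\<And>k. scls (w k) = S k"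
    and "((\<lambda>k. M *v w k - w (k + 1)) \<longlongrightarrow> 0) cofinite"
    using lift_limit_pseudo_orbit by blast
  then obtain z where orbit: "\<And>k. z (k + 1) = M *v z k"
    and close: "((\<lambda>k. z k - w k) \<longlongrightarrow> 0) cofinite"
    using linear_pseudo_orbit_shadowing by blast
  have "Sdist (iter_int Sphere (gA A) k (scls (z 0))) (S k) \<le> norm (z k - w k)" for k
    unfolding iter_int_gA_orbit[of z, OF orbit] w[symmetric] dist_norm[symmetric]
    by (intro Sdist_le scls_self)
  moreover have "0 \<le> Sdist (iter_int Sphere (gA A) k (scls (z 0))) (S k)" for k
    unfolding iter_int_gA_orbit[of z, OF orbit] w[symmetric] using scls_self by (intro Sdist_nonneg) blast+
  ultimately have "((\<lambda>k. Sdist (iter_int Sphere (gA A) k (scls (z 0))) (S k)) \<longlongrightarrow> 0) cofinite"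
    by (intro tendsto_sandwich[OF _ _ tendsto_const tendsto_norm_zero[OF close]] always_eventually allI)
  then show "\<exists>y\<in>Sphere. ((\<lambda>k. Sdist (iter_int Sphere (gA A) k y) (S k)) \<longlongrightarrow> 0) cofinite"
    by (auto simp: Sphere_def)
qed

end

lemma trace_gt_2_if_no_unimodular_eigenvalue:
  fixes A :: "int^2^2"
  assumes det: "det A = 1"
    and no_root: "\<forall>z::complex. cmod z = 1 \<longrightarrow>
           det ((\<chi> i j. (if i = j then z else 0) - complex_of_int (A$i$j)) :: complex^2^2) \<noteq> 0"
  shows "\<bar>A$1$1 + A$2$2\<bar> > 2"
proof (rule ccontr)
  define t where "t = real_of_int (A$1$1 + A$2$2)"
  assume "\<not> \<bar>A$1$1 + A$2$2\<bar> > 2"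
  then have "\<bar>t\<bar> \<le> 2" by (simp add: t_def flip: of_int_abs)
  then have t2: "(t / 2)\<^sup>2 \<le> 1" by (simp add: abs_square_le_1)
  define z where "z = Complex (t / 2) (sqrt (1 - (t / 2)\<^sup>2))"
  have "cmod z = 1" using t2 by (simp add: z_def cmod_def)
  have "det ((\<chi> i j. (if i = j then z else 0) - complex_of_int (A$i$j)) :: complex^2^2)
      = z\<^sup>2 - complex_of_int (A$1$1 + A$2$2) * z + complex_of_int (A$1$1 * A$2$2 - A$1$2 * A$2$1)"
    by (simp add: det_2 algebra_simps power2_eq_square)
  also have "\<dots> = z\<^sup>2 - complex_of_real t * z + 1"
    using det by (simp add: det_2 t_def)
  also have "\<dots> = 0"
    using t2 by (simp add: z_def complex_eq_iff power2_eq_square algebra_simps)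
  finally show False using no_root \<open>cmod z = 1\<close> by blast
qed

theorem mainTheorem16:
  fixes A :: "int^2^2"
  assumes "det A = 1"
    and "\<forall>z::complex. cmod z = 1 \<longrightarrow>
           det ((\<chi> i j. (if i = j then z else 0) - complex_of_int (A$i$j)) :: complex^2^2) \<noteq> 0"
  shows "two_sided_limit_shadowing Sphere Sdist (gA A)"
proof -
  interpret hyperbolic_SL2Z A
    using assms trace_gt_2_if_no_unimodular_eigenvalue by unfold_locales
  show ?thesis by (rule two_sided_limit_shadowing_gA)
qed

end
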